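(* Let $m\ge 1$. Let $f:\mathbb{R}^m\to[0,\infty)$ be a bounded continuous probability density with $f(\mathbf{0})>0$ that attains its maximum at $\mathbf{t}=\mathbf{0}$, and let $\gamma$ be a probability density on $\mathbb{R}^m$. Consider the model $$\mathbf{Z}\mid\boldsymbol{\mu}\sim f(\mathbf{z}-\boldsymbol{\mu}),\qquad \boldsymbol{\mu}\sim \pi_0\,\delta_{\mathbf 0}(\boldsymbol{\mu})+(1-\pi_0)\,\gamma(\boldsymbol{\mu}),$$ with $\pi_0\in(0,1)$, where $\delta_{\mathbf 0}$ is the point mass at $\mathbf{0}\in\mathbb{R}^m$. Define $$c=\frac{\int_{\mathbb{R}^m} f(-\mathbf{v})\gamma(\mathbf{v})\,d\mathbf{v}}{f(\mathbf{0})}\ (\le 1).$$ If $\pi_0>\frac{c}{1+c}$, then there exists a threshold $t=t(\pi_0)>0$ such that whenever $\|\mathbf{z}\|_2<t$, the marginal posterior median of every coordinate is zero: $\mathrm{Med}(\mu_i\mid \mathbf{Z}=\mathbf{z})=0$ for every $1\le i\le m$ (indeed $P(\mu_i=0\mid\mathbf Z=\mathbf z)>1/2$ for all $i$).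
   Context: $\mathrm{Med}(\mu_i\mid\mathbf z)$ denotes the median of the marginal posterior distribution of the $i$-th coordinate $\mu_i$ of $\boldsymbol\mu$ given $\mathbf Z=\mathbf z$. The posterior is the mixture assigning mass to $\{\boldsymbol\mu=\mathbf 0\}$ proportional to $\pi_0 f(\mathbf z)$ and density proportional to $(1-\pi_0)f(\mathbf z-\boldsymbol\mu)\gamma(\boldsymbol\mu)$ on the rest. *)

theory Defs
  imports "HOL-Analysis.Analysis"
begin

text \<open>Posterior probability of a Borel set A of mu-values given Z = z, in the model
  Z | mu ~ f(z - mu), mu ~ pi0 delta_0 + (1 - pi0) gamma.\<close>
definition post_prob ::
  "real \<Rightarrow> (real^'m \<Rightarrow> real) \<Rightarrow> (real^'m \<Rightarrow> real) \<Rightarrow> real^'m \<Rightarrow> (real^'m) set \<Rightarrow> real" where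
  "post_prob pi0 f g z A =
     (pi0 * f z * indicator A 0 + (1 - pi0) * (\<integral>v\<in>A. f (z - v) * g v \<partial>lborel)) /
     (pi0 * f z + (1 - pi0) * (\<integral>v. f (z - v) * g v \<partial>lborel))"

definition is_post_median ::
  "real \<Rightarrow> (real^'m \<Rightarrow> real) \<Rightarrow> (real^'m \<Rightarrow> real) \<Rightarrow> real^'m \<Rightarrow> 'm \<Rightarrow> real \<Rightarrow> bool" where
  "is_post_median pi0 f g z i a \<longleftrightarrow>
     post_prob pi0 f g z {v. v $ i \<le> a} \<ge> 1/2 \<and> post_prob pi0 f g z {v. v $ i \<ge> a} \<ge> 1/2"

end

theory Submission
  imports Defs
begin

text \<open>Near \<open>z = 0\<close> the posterior weight \<open>\<pi>\<^sub>0 f(z)\<close> of the atom at \<open>0\<close> exceeds the total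
  weight \<open>(1 - \<pi>\<^sub>0) (f * \<gamma>)(z)\<close> of the continuous part: at \<open>z = 0\<close> this is exactly the condition
  \<open>\<pi>\<^sub>0 > c / (1 + c)\<close>, and both weights are continuous in \<open>z\<close> (the convolution by dominated
  convergence, since \<open>f\<close> is bounded). Then every Borel set of \<open>\<mu>\<close>-values has posterior
  probability above \<open>1/2\<close> if it contains \<open>0\<close> and below \<open>1/2\<close> otherwise, which forces every
  coordinate median to be \<open>0\<close>.\<close>

lemma set_integral_nonneg_le_integral:
  fixes h :: "'a \<Rightarrow> real"
  assumes "integrable M h" "\<And>x. h x \<ge> 0"
  shows "0 \<le> (\<integral>x\<in>A. h x \<partial>M)" "(\<integral>x\<in>A. h x \<partial>M) \<le> (\<integral>x. h x \<partial>M)"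
  unfolding set_lebesgue_integral_def using assms
  by (auto simp: indicator_def intro!: Bochner_Integration.integral_nonneg integral_mono')

lemma integrable_bounded_convolution:
  fixes f g :: "'a::euclidean_space \<Rightarrow> real"
  assumes "continuous_on UNIV f" "\<And>x. \<bar>f x\<bar> \<le> B" "integrable lborel g"
  shows "integrable lborel (\<lambda>v. f (z - v) * g v)"
proof (rule Bochner_Integration.integrable_bound)
  show "integrable lborel (\<lambda>v. B * \<bar>g v\<bar>)" using assms(3) by simp
  have "f \<in> borel_measurable borel" "g \<in> borel_measurable lborel"
    using assms(1,3) by (simp_all add: borel_measurable_continuous_onI)
  then show "(\<lambda>v. f (z - v) * g v) \<in> borel_measurable lborel" by measurable
  have "\<bar>f (z - v)\<bar> \<le> \<bar>B\<bar>" for v using assms(2) abs_ge_self order_trans by blast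
  then show "AE v in lborel. norm (f (z - v) * g v) \<le> norm (B * \<bar>g v\<bar>)"
    by (simp add: abs_mult mult_right_mono)
qed

lemma isCont_bounded_convolution:
  fixes f g :: "'a::euclidean_space \<Rightarrow> real"
  assumes f_cont: "continuous_on UNIV f" and f_bdd: "\<And>x. \<bar>f x\<bar> \<le> B"
    and g_int: "integrable lborel g"
  shows "isCont (\<lambda>z. \<integral>v. f (z - v) * g v \<partial>lborel) z0"
proof (rule continuous_at_sequentiallyI)
  fix X assume X: "X \<longlonglongrightarrow> z0"
  have "f \<in> borel_measurable borel" "g \<in> borel_measurable lborel"
    using f_cont g_int by (simp_all add: borel_measurable_continuous_onI)
  then have meas: "(\<lambda>v. f (z - v) * g v) \<in> borel_measurable lborel" for z by measurable
  show "(\<lambda>n. \<integral>v. f (X n - v) * g v \<partial>lborel) \<longlonglongrightarrow> (\<integral>v. f (z0 - v) * g v \<partial>lborel)"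
  proof (rule integral_dominated_convergence[where w="\<lambda>v. B * \<bar>g v\<bar>"])
    show "integrable lborel (\<lambda>v. B * \<bar>g v\<bar>)" using g_int by simp
    show "AE v in lborel. (\<lambda>n. f (X n - v) * g v) \<longlonglongrightarrow> f (z0 - v) * g v"
    proof (rule AE_I2)
      fix v
      have "(\<lambda>n. f (X n - v)) \<longlonglongrightarrow> f (z0 - v)"
        using f_cont X by (intro isCont_tendsto_compose[where g=f] tendsto_intros)
          (simp add: continuous_on_eq_continuous_at)
      then show "(\<lambda>n. f (X n - v) * g v) \<longlonglongrightarrow> f (z0 - v) * g v" by (intro tendsto_intros)
    qed
    show "AE v in lborel. norm (f (X n - v) * g v) \<le> B * \<bar>g v\<bar>" for n
      using f_bdd by (auto simp: abs_mult intro!: mult_right_mono)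
  qed (use meas in auto)
qed

lemma post_prob_compare_half:
  fixes f g :: "real^'m \<Rightarrow> real"
  assumes int: "integrable lborel (\<lambda>v. f (z - v) * g v)"
    and nonneg: "\<And>v. f (z - v) * g v \<ge> 0"
    and atom_dominates: "pi0 * f z > (1 - pi0) * (\<integral>v. f (z - v) * g v \<partial>lborel)"
    and "pi0 < 1"
  shows "post_prob pi0 f g z A > 1/2 \<longleftrightarrow> 0 \<in> A"
    and "post_prob pi0 f g z A < 1/2 \<longleftrightarrow> 0 \<notin> A"
proof -
  define J where "J = (\<integral>v. f (z - v) * g v \<partial>lborel)"
  define S where "S = (\<integral>v\<in>A. f (z - v) * g v \<partial>lborel)"
  have "0 \<le> S" "S \<le> J"
    unfolding S_def J_def using set_integral_nonneg_le_integral[OF int nonneg] by auto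
  then have S: "0 \<le> (1 - pi0) * S" "(1 - pi0) * S \<le> (1 - pi0) * J"
    using \<open>pi0 < 1\<close> by (auto intro: mult_left_mono)
  have post: "post_prob pi0 f g z A
      = (pi0 * f z * indicator A 0 + (1 - pi0) * S) / (pi0 * f z + (1 - pi0) * J)"
    unfolding post_prob_def S_def J_def ..
  have "pi0 * f z > (1 - pi0) * J" using atom_dominates unfolding J_def .
  then show "post_prob pi0 f g z A > 1/2 \<longleftrightarrow> 0 \<in> A"
    and "post_prob pi0 f g z A < 1/2 \<longleftrightarrow> 0 \<notin> A"
    unfolding post using S by (auto simp: field_simps indicator_def)
qed

lemma is_post_median_iff_zero:
  assumes "\<And>A. post_prob pi0 f g z A > 1/2 \<longleftrightarrow> 0 \<in> A"
    and "\<And>A. post_prob pi0 f g z A < 1/2 \<longleftrightarrow> 0 \<notin> A"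
  shows "is_post_median pi0 f g z i a \<longleftrightarrow> a = 0"
  unfolding is_post_median_def
  using assms[of "{v. v $ i \<le> a}"] assms[of "{v. v $ i \<ge> a}"]
  by (cases a "0::real" rule: linorder_cases) auto

lemma mixing_weight_condition:
  fixes pi0 J F :: real
  assumes "F > 0" "J \<ge> 0" "pi0 > (let c = J / F in c / (1 + c))"
  shows "pi0 * F > (1 - pi0) * J"
proof -
  have "pi0 * (F + J) > J"
    using assms by (simp add: Let_def field_simps add_pos_nonneg)
  then show ?thesis by (simp add: algebra_simps)
qed

theorem theorem1:
  fixes f g :: "real^'m \<Rightarrow> real" and pi0 :: real
  assumes f_cont: "continuous_on UNIV f"
    and f_nonneg: "\<And>x. f x \<ge> 0"
    and f_bdd: "bounded (range f)"
    and f_int: "integrable lborel f" and f_total: "(\<integral>x. f x \<partial>lborel) = 1"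
    and f0_pos: "f 0 > 0"
    and f_max: "\<And>t. f t \<le> f 0"
    and g_meas: "g \<in> borel_measurable lborel"
    and g_nonneg: "\<And>x. g x \<ge> 0"
    and g_int: "integrable lborel g" and g_total: "(\<integral>x. g x \<partial>lborel) = 1"
    and pi0_pos: "0 < pi0" and pi0_lt1: "pi0 < 1"
    and pi0_big: "pi0 > (let c = (\<integral>v. f (- v) * g v \<partial>lborel) / f 0 in c / (1 + c))"
  shows "\<exists>t>0. \<forall>z :: real^'m. norm z < t \<longrightarrow>
           (\<forall>i. post_prob pi0 f g z {v. v $ i = 0} > 1/2 \<and>
                {a. is_post_median pi0 f g z i a} = {0})"
proof -
  define J where "J z = (\<integral>v. f (z - v) * g v \<partial>lborel)" for z
  have f_abs: "\<bar>f x\<bar> \<le> f 0" for x using f_nonneg f_max by simp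
  have nonneg: "f (z - v) * g v \<ge> 0" for z v using f_nonneg g_nonneg by simp
  have int: "integrable lborel (\<lambda>v. f (z - v) * g v)" for z
    using integrable_bounded_convolution[OF f_cont f_abs g_int] .
  define H where "H z = pi0 * f z - (1 - pi0) * J z" for z
  have "isCont H 0"
    unfolding H_def J_def using isCont_bounded_convolution[OF f_cont f_abs g_int] f_cont
    by (intro continuous_intros) (auto simp: continuous_on_eq_continuous_at)
  moreover have "H 0 > 0"
    using mixing_weight_condition[OF f0_pos _ pi0_big] nonneg[of 0]
    by (simp add: H_def J_def Bochner_Integration.integral_nonneg)
  ultimately have "\<forall>\<^sub>F z in nhds 0. H z > 0"
    unfolding isCont_def tendsto_at_iff_tendsto_nhds by (rule order_tendstoD(1))
  then obtain t where "t > 0" and t: "\<And>z. dist z 0 < t \<Longrightarrow> pi0 * f z > (1 - pi0) * J z"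
    unfolding eventually_nhds_metric H_def by auto
  have "post_prob pi0 f g z {v. v $ i = 0} > 1/2 \<and> {a. is_post_median pi0 f g z i a} = {0}"
    if "norm z < t" for z i
  proof -
    note compare = post_prob_compare_half[OF int nonneg t[unfolded J_def] pi0_lt1]
    show ?thesis
      using \<open>norm z < t\<close> compare is_post_median_iff_zero[OF compare] by (auto simp: dist_norm)
  qed
  with \<open>t > 0\<close> show ?thesis by blast
qed

end
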